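(* Let $0\le\alpha<\tfrac12$ and let $D$ be a distribution on $\{0,1\}^n$ given by a tree BN (every node has at most one parent and the underlying graph is a rooted tree) with all conditional probabilities in $(0,1)$ that is $\alpha$-difference bounded. Then every conjunction $f$ of $d$ literals satisfies $$L_1(f)\le\left(\frac{2-2\alpha}{1-2\alpha}\right)^{2d}.$$
   Context: For a BN with parent sets $\operatorname{pa}(v)$, let $\mu_{v,x_{\operatorname{pa}(v)}}=P(X_v=1\mid X_{\operatorname{pa}(v)}=x_{\operatorname{pa}(v)})$ and $\sigma_{v,x_{\operatorname{pa}(v)}}=\sqrt{\mu_{v,x_{\operatorname{pa}(v)}}(1-\mu_{v,x_{\operatorname{pa}(v)}})}$. The BN is $\alpha$-difference bounded if for every $v$ and every two assignments $x,y$ to $\operatorname{pa}(v)$, $|\mu_{v,x}-\mu_{v,y}|\le\alpha$ and $|\sigma_{v,x}-\sigma_{v,y}|\le\alpha$. The BN-induced basis is $\phi_v(x)=(x_v-\mu_{v,x_{\operatorname{pa}(v)}})/\sigma_{v,x_{\operatorname{pa}(v)}}$, $\phi_S=\prod_{v\in S}\phi_v$; $\hat f_S=\mathbb{E}_D[f(X)\phi_S(X)]$; $L_1(f)=\sum_{S\subseteq[n]}|\hat f_S|$. A conjunction of $d$ literals is $f(x)=\prod_{i\in T_1}x_i\prod_{j\in T_0}(1-x_j)$ with $T_0,T_1$ disjoint and $|T_0\cup T_1|=d$. *)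

theory Defs
  imports "HOL-Analysis.Analysis" "HOL-Library.FuncSet"
begin

text \<open>The parent structure of a
  tree BN is a partial map par :: nat => nat option (at most one parent per node).
  p v b is the conditional probability P(X_v = 1 | X_par(v) = b); for a root only
  p v False is used (the empty parent assignment).\<close>

definition cube :: "nat \<Rightarrow> (nat \<Rightarrow> bool) set" where
  "cube n = PiE {0..<n} (\<lambda>_. UNIV)"

definition pa_val :: "(nat \<Rightarrow> nat option) \<Rightarrow> (nat \<Rightarrow> bool) \<Rightarrow> nat \<Rightarrow> bool" where
  "pa_val par x v = (case par v of None \<Rightarrow> False | Some u \<Rightarrow> x u)"

definition bn_mu :: "(nat \<Rightarrow> nat option) \<Rightarrow> (nat \<Rightarrow> bool \<Rightarrow> real) \<Rightarrow> (nat \<Rightarrow> bool) \<Rightarrow> nat \<Rightarrow> real" where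
  "bn_mu par p x v = p v (pa_val par x v)"

definition bn_sigma :: "(nat \<Rightarrow> nat option) \<Rightarrow> (nat \<Rightarrow> bool \<Rightarrow> real) \<Rightarrow> (nat \<Rightarrow> bool) \<Rightarrow> nat \<Rightarrow> real" where
  "bn_sigma par p x v = sqrt (bn_mu par p x v * (1 - bn_mu par p x v))"

definition bn_prob :: "nat \<Rightarrow> (nat \<Rightarrow> nat option) \<Rightarrow> (nat \<Rightarrow> bool \<Rightarrow> real) \<Rightarrow> (nat \<Rightarrow> bool) \<Rightarrow> real" where
  "bn_prob n par p x = (\<Prod>v<n. if x v then bn_mu par p x v else 1 - bn_mu par p x v)"

definition bn_expect :: "nat \<Rightarrow> (nat \<Rightarrow> nat option) \<Rightarrow> (nat \<Rightarrow> bool \<Rightarrow> real) \<Rightarrow> ((nat \<Rightarrow> bool) \<Rightarrow> real) \<Rightarrow> real" where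
  "bn_expect n par p g = (\<Sum>x\<in>cube n. bn_prob n par p x * g x)"

definition bn_phi :: "(nat \<Rightarrow> nat option) \<Rightarrow> (nat \<Rightarrow> bool \<Rightarrow> real) \<Rightarrow> nat \<Rightarrow> (nat \<Rightarrow> bool) \<Rightarrow> real" where
  "bn_phi par p v x = (of_bool (x v) - bn_mu par p x v) / bn_sigma par p x v"

definition bn_phiS :: "(nat \<Rightarrow> nat option) \<Rightarrow> (nat \<Rightarrow> bool \<Rightarrow> real) \<Rightarrow> nat set \<Rightarrow> (nat \<Rightarrow> bool) \<Rightarrow> real" where
  "bn_phiS par p S x = (\<Prod>v\<in>S. bn_phi par p v x)"

definition bn_coeff :: "nat \<Rightarrow> (nat \<Rightarrow> nat option) \<Rightarrow> (nat \<Rightarrow> bool \<Rightarrow> real) \<Rightarrow> ((nat \<Rightarrow> bool) \<Rightarrow> real) \<Rightarrow> nat set \<Rightarrow> real" where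
  "bn_coeff n par p f S = bn_expect n par p (\<lambda>x. f x * bn_phiS par p S x)"

definition bn_L1 :: "nat \<Rightarrow> (nat \<Rightarrow> nat option) \<Rightarrow> (nat \<Rightarrow> bool \<Rightarrow> real) \<Rightarrow> ((nat \<Rightarrow> bool) \<Rightarrow> real) \<Rightarrow> real" where
  "bn_L1 n par p f = (\<Sum>S\<in>Pow {0..<n}. \<bar>bn_coeff n par p f S\<bar>)"

definition is_tree :: "nat \<Rightarrow> (nat \<Rightarrow> nat option) \<Rightarrow> bool" where
  "is_tree n par \<longleftrightarrow>
     (\<forall>v<n. \<forall>u. par v = Some u \<longrightarrow> u < n) \<and>
     (\<exists>r::nat \<Rightarrow> nat. \<forall>v<n. \<forall>u. par v = Some u \<longrightarrow> r u < r v) \<and>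
     card {v. v < n \<and> par v = None} = 1"

definition cpt_open :: "nat \<Rightarrow> (nat \<Rightarrow> nat option) \<Rightarrow> (nat \<Rightarrow> bool \<Rightarrow> real) \<Rightarrow> bool" where
  "cpt_open n par p \<longleftrightarrow>
     (\<forall>v<n. (par v = None \<longrightarrow> 0 < p v False \<and> p v False < 1) \<and>
            (par v \<noteq> None \<longrightarrow> (\<forall>b. 0 < p v b \<and> p v b < 1)))"

definition diff_bounded :: "real \<Rightarrow> nat \<Rightarrow> (nat \<Rightarrow> nat option) \<Rightarrow> (nat \<Rightarrow> bool \<Rightarrow> real) \<Rightarrow> bool" where
  "diff_bounded \<alpha> n par p \<longleftrightarrow>
     (\<forall>v<n. \<forall>x y. \<bar>bn_mu par p x v - bn_mu par p y v\<bar> \<le> \<alpha> \<and>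
                  \<bar>bn_sigma par p x v - bn_sigma par p y v\<bar> \<le> \<alpha>)"

definition conjunction :: "nat set \<Rightarrow> nat set \<Rightarrow> (nat \<Rightarrow> bool) \<Rightarrow> real" where
  "conjunction T0 T1 x = (\<Prod>i\<in>T1. of_bool (x i)) * (\<Prod>j\<in>T0. 1 - of_bool (x j))"

end

theory Submission
  imports Defs
begin

(* Peel off a leaf v of the tree. Given its parent, the basis function phi_v has conditional
   mean 0 and variance 1, so for functions a, b that do not read x_v the Fourier coefficients of
   a + b * phi_v over V + v are those of a (sets without v) and of b (sets with v); hence
   L1(a + b * phi_v) = L1(a) + L1(b). A literal on x_v is mu_v + sigma_v * phi_v or its
   complement, and mu_v, sigma_v are affine in the parent bit x_u, with constant terms of size
   at most 1 and slopes at most alpha by difference-boundedness. So a conjunction g * l_v of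
   d + 1 literals satisfies L1 <= 2 L1(g) + 2 alpha L1(g * x_u), where g * x_u is a conjunction
   of at most d + 1 literals on the smaller tree. With K = ((2 - 2 alpha)/(1 - 2 alpha))^2,
   which satisfies 2 + 2 alpha K <= K, induction gives L1 <= K^d. *)

(* bn_prob, bn_expect, bn_coeff and bn_L1 over an arbitrary node set V in place of {0..<n};
   when V is closed under parents this is the marginal network on V. *)
definition bn_prob_on :: "(nat \<Rightarrow> nat option) \<Rightarrow> (nat \<Rightarrow> bool \<Rightarrow> real) \<Rightarrow> nat set \<Rightarrow> (nat \<Rightarrow> bool) \<Rightarrow> real" where
  "bn_prob_on par p V x = (\<Prod>w\<in>V. if x w then bn_mu par p x w else 1 - bn_mu par p x w)"

definition bn_expect_on :: "(nat \<Rightarrow> nat option) \<Rightarrow> (nat \<Rightarrow> bool \<Rightarrow> real) \<Rightarrow> nat set \<Rightarrow> ((nat \<Rightarrow> bool) \<Rightarrow> real) \<Rightarrow> real" where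
  "bn_expect_on par p V g = (\<Sum>x\<in>PiE V (\<lambda>_. UNIV). bn_prob_on par p V x * g x)"

definition bn_coeff_on :: "(nat \<Rightarrow> nat option) \<Rightarrow> (nat \<Rightarrow> bool \<Rightarrow> real) \<Rightarrow> nat set \<Rightarrow> ((nat \<Rightarrow> bool) \<Rightarrow> real) \<Rightarrow> nat set \<Rightarrow> real" where
  "bn_coeff_on par p V f S = bn_expect_on par p V (\<lambda>x. f x * bn_phiS par p S x)"

definition bn_L1_on :: "(nat \<Rightarrow> nat option) \<Rightarrow> (nat \<Rightarrow> bool \<Rightarrow> real) \<Rightarrow> nat set \<Rightarrow> ((nat \<Rightarrow> bool) \<Rightarrow> real) \<Rightarrow> real" where
  "bn_L1_on par p V f = (\<Sum>S\<in>Pow V. \<bar>bn_coeff_on par p V f S\<bar>)"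

lemma bn_L1_eq_bn_L1_on: "bn_L1 n par p f = bn_L1_on par p {0..<n} f"
  unfolding bn_L1_def bn_L1_on_def bn_coeff_def bn_coeff_on_def bn_expect_def bn_expect_on_def
    cube_def bn_prob_def bn_prob_on_def
  by (simp add: atLeast0LessThan)

lemma bn_coeff_on_linear:
  "bn_coeff_on par p V (\<lambda>x. a * f x + b * g x) S = a * bn_coeff_on par p V f S + b * bn_coeff_on par p V g S"
  unfolding bn_coeff_on_def bn_expect_on_def
  by (simp add: algebra_simps sum.distrib sum_distrib_left)

lemma bn_L1_on_nonneg: "0 \<le> bn_L1_on par p V f"
  unfolding bn_L1_on_def by (simp add: sum_nonneg)

lemma bn_L1_on_linear_le:
  "bn_L1_on par p V (\<lambda>x. a * f x + b * g x) \<le> \<bar>a\<bar> * bn_L1_on par p V f + \<bar>b\<bar> * bn_L1_on par p V g"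
proof -
  have "\<bar>bn_coeff_on par p V (\<lambda>x. a * f x + b * g x) S\<bar>
      \<le> \<bar>a\<bar> * \<bar>bn_coeff_on par p V f S\<bar> + \<bar>b\<bar> * \<bar>bn_coeff_on par p V g S\<bar>" for S
    unfolding bn_coeff_on_linear abs_mult[symmetric] by (rule abs_triangle_ineq)
  then have "bn_L1_on par p V (\<lambda>x. a * f x + b * g x)
      \<le> (\<Sum>S\<in>Pow V. \<bar>a\<bar> * \<bar>bn_coeff_on par p V f S\<bar> + \<bar>b\<bar> * \<bar>bn_coeff_on par p V g S\<bar>)"
    unfolding bn_L1_on_def by (rule sum_mono)
  then show ?thesis
    unfolding bn_L1_on_def by (simp add: sum.distrib sum_distrib_left)
qed

lemma bn_L1_on_zero: "bn_L1_on par p V (\<lambda>_. 0) = 0"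
  unfolding bn_L1_on_def bn_coeff_on_def bn_expect_on_def by simp

definition independent_of :: "nat \<Rightarrow> ((nat \<Rightarrow> bool) \<Rightarrow> real) \<Rightarrow> bool" where
  "independent_of v h \<longleftrightarrow> (\<forall>x b. h (x(v := b)) = h x)"

lemma independent_of_mult:
  "independent_of v f \<Longrightarrow> independent_of v g \<Longrightarrow> independent_of v (\<lambda>x. f x * g x)"
  by (simp add: independent_of_def)

lemma independent_of_linear:
  "independent_of v f \<Longrightarrow> independent_of v g \<Longrightarrow> independent_of v (\<lambda>x. a * f x + b * g x)"
  by (simp add: independent_of_def)

lemma pa_val_upd: "par w \<noteq> Some v \<Longrightarrow> pa_val par (x(v := b)) w = pa_val par x w"
  by (auto simp: pa_val_def split: option.splits)

lemma bn_phi_upd: "par w \<noteq> Some v \<Longrightarrow> w \<noteq> v \<Longrightarrow> bn_phi par p w (x(v := b)) = bn_phi par p w x"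
  by (simp add: bn_phi_def bn_sigma_def bn_mu_def pa_val_upd)

lemma independent_of_pa_val: "par w \<noteq> Some v \<Longrightarrow> independent_of v (\<lambda>x. of_bool (pa_val par x w))"
  by (simp add: independent_of_def pa_val_upd)

lemma independent_of_bn_phiS:
  assumes "v \<notin> S" and "\<forall>w\<in>S. par w \<noteq> Some v"
  shows "independent_of v (bn_phiS par p S)"
proof -
  have "bn_phiS par p S (x(v := b)) = bn_phiS par p S x" for x b
    unfolding bn_phiS_def using assms by (intro prod.cong refl bn_phi_upd) auto
  then show ?thesis by (simp add: independent_of_def)
qed

lemma independent_of_conjunction:
  assumes "v \<notin> T0" and "v \<notin> T1"
  shows "independent_of v (conjunction T0 T1)"
proof -
  have "conjunction T0 T1 (x(v := b)) = conjunction T0 T1 x" for x b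
    unfolding conjunction_def using assms by (intro arg_cong2[where f = "(*)"] prod.cong) auto
  then show ?thesis by (simp add: independent_of_def)
qed

lemma bn_expect_on_insert:
  assumes "finite V" and "v \<notin> V" and "\<forall>w\<in>V. par w \<noteq> Some v" and "par v \<noteq> Some v"
  shows "bn_expect_on par p (insert v V) g = bn_expect_on par p V
           (\<lambda>y. bn_mu par p y v * g (y(v := True)) + (1 - bn_mu par p y v) * g (y(v := False)))"
proof -
  have mu_upd: "bn_mu par p (y(v := b)) w = bn_mu par p y w" if "w \<in> insert v V" for y b w
    using that assms(3,4) by (auto simp: bn_mu_def pa_val_upd)
  have prob: "bn_prob_on par p (insert v V) (y(v := b))
      = (if b then bn_mu par p y v else 1 - bn_mu par p y v) * bn_prob_on par p V y" for y b
  proof -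
    have "(\<Prod>w\<in>V. if (y(v := b)) w then bn_mu par p (y(v := b)) w else 1 - bn_mu par p (y(v := b)) w)
        = (\<Prod>w\<in>V. if y w then bn_mu par p y w else 1 - bn_mu par p y w)"
      by (rule prod.cong) (use assms(2) mu_upd in auto)
    then show ?thesis
      unfolding bn_prob_on_def using assms(1,2) mu_upd[of v] by simp
  qed
  have "bn_expect_on par p (insert v V) g
      = (\<Sum>(b, y)\<in>UNIV \<times> PiE V (\<lambda>_. UNIV). bn_prob_on par p (insert v V) (y(v := b)) * g (y(v := b)))"
    unfolding bn_expect_on_def PiE_insert_eq
    by (subst sum.reindex) (use inj_combinator[OF assms(2), of "\<lambda>_. UNIV"] in \<open>auto simp: case_prod_beta\<close>)
  also have "\<dots> = (\<Sum>y\<in>PiE V (\<lambda>_. UNIV). \<Sum>b\<in>UNIV. bn_prob_on par p (insert v V) (y(v := b)) * g (y(v := b)))"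
    by (subst sum.cartesian_product[symmetric]) (rule sum.swap)
  also have "\<dots> = bn_expect_on par p V
      (\<lambda>y. bn_mu par p y v * g (y(v := True)) + (1 - bn_mu par p y v) * g (y(v := False)))"
    unfolding bn_expect_on_def UNIV_bool prob by (intro sum.cong) (auto simp: algebra_simps)
  finally show ?thesis .
qed

locale bn_leaf =
  fixes par :: "nat \<Rightarrow> nat option" and p :: "nat \<Rightarrow> bool \<Rightarrow> real" and V :: "nat set" and v :: nat
  assumes finite_V: "finite V" and v_notin: "v \<notin> V" and no_child: "\<forall>w\<in>V. par w \<noteq> Some v"
    and no_loop: "par v \<noteq> Some v"
    and mu_pos: "0 < bn_mu par p x v" and mu_less_1: "bn_mu par p x v < 1"
begin

abbreviation "\<mu> x \<equiv> bn_mu par p x v"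
abbreviation "\<sigma> x \<equiv> bn_sigma par p x v"
abbreviation "\<phi> x \<equiv> bn_phi par p v x"

lemma sigma_pos: "0 < \<sigma> x"
  using mu_pos mu_less_1 by (simp add: bn_sigma_def)

lemma sigma_sq: "\<sigma> x * \<sigma> x = \<mu> x * (1 - \<mu> x)"
  using mu_pos[of x] mu_less_1[of x] by (simp add: bn_sigma_def)

lemma phi_upd_self: "\<phi> (y(v := b)) = (of_bool b - \<mu> y) / \<sigma> y"
  using no_loop by (simp add: bn_phi_def bn_sigma_def bn_mu_def pa_val_upd)

lemma expect_insert:
  "bn_expect_on par p (insert v V) g
     = bn_expect_on par p V (\<lambda>y. \<mu> y * g (y(v := True)) + (1 - \<mu> y) * g (y(v := False)))"
  using bn_expect_on_insert[OF finite_V v_notin no_child no_loop] .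

(* The next two lemmas are E[phi_v | parent] = 0 and E[phi_v^2 | parent] = 1. *)
lemma expect_insert_affine_phi:
  assumes "independent_of v a" and "independent_of v b"
  shows "bn_expect_on par p (insert v V) (\<lambda>x. a x + b x * \<phi> x) = bn_expect_on par p V a"
proof -
  have "\<mu> y * (a y + b y * ((1 - \<mu> y) / \<sigma> y)) + (1 - \<mu> y) * (a y + b y * ((0 - \<mu> y) / \<sigma> y)) = a y" for y
    by (simp add: field_simps)
  then show ?thesis
    using assms unfolding expect_insert independent_of_def phi_upd_self by simp
qed

lemma expect_insert_affine_phi_mult_phi:
  assumes "independent_of v a" and "independent_of v b"
  shows "bn_expect_on par p (insert v V) (\<lambda>x. (a x + b x * \<phi> x) * \<phi> x) = bn_expect_on par p V b"
proof -
  have "\<mu> y * ((a y + b y * ((1 - \<mu> y) / \<sigma> y)) * ((1 - \<mu> y) / \<sigma> y))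
      + (1 - \<mu> y) * ((a y + b y * ((0 - \<mu> y) / \<sigma> y)) * ((0 - \<mu> y) / \<sigma> y))
      = b y * (\<mu> y * (1 - \<mu> y)) / (\<sigma> y * \<sigma> y)" for y
    using sigma_pos[of y] by (simp add: field_simps)
  also have "b y * (\<mu> y * (1 - \<mu> y)) / (\<sigma> y * \<sigma> y) = b y" for y
    using sigma_pos[of y] by (simp add: sigma_sq[symmetric])
  finally show ?thesis
    using assms unfolding expect_insert independent_of_def phi_upd_self by simp
qed

lemma coeff_insert_affine_phi:
  assumes "independent_of v a" and "independent_of v b" and "S \<subseteq> V"
  shows "bn_coeff_on par p (insert v V) (\<lambda>x. a x + b x * \<phi> x) S = bn_coeff_on par p V a S"
    and "bn_coeff_on par p (insert v V) (\<lambda>x. a x + b x * \<phi> x) (insert v S) = bn_coeff_on par p V b S"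
proof -
  have phiS: "independent_of v (bn_phiS par p S)"
    using assms(3) v_notin no_child by (intro independent_of_bn_phiS) auto
  have "bn_phiS par p (insert v S) x = \<phi> x * bn_phiS par p S x" for x
    unfolding bn_phiS_def using assms(3) v_notin finite_V by (subst prod.insert) (auto dest: finite_subset)
  then have "bn_coeff_on par p (insert v V) (\<lambda>x. a x + b x * \<phi> x) (insert v S)
      = bn_expect_on par p (insert v V)
          (\<lambda>x. (a x * bn_phiS par p S x + b x * bn_phiS par p S x * \<phi> x) * \<phi> x)"
    unfolding bn_coeff_on_def by (simp add: algebra_simps)
  also have "\<dots> = bn_coeff_on par p V b S"
    unfolding bn_coeff_on_def using assms(1,2) phiS
    by (intro expect_insert_affine_phi_mult_phi independent_of_mult)
  finally show "bn_coeff_on par p (insert v V) (\<lambda>x. a x + b x * \<phi> x) (insert v S) = bn_coeff_on par p V b S" .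
  have "bn_coeff_on par p (insert v V) (\<lambda>x. a x + b x * \<phi> x) S
      = bn_expect_on par p (insert v V) (\<lambda>x. a x * bn_phiS par p S x + b x * bn_phiS par p S x * \<phi> x)"
    unfolding bn_coeff_on_def by (simp add: algebra_simps)
  also have "\<dots> = bn_coeff_on par p V a S"
    unfolding bn_coeff_on_def using assms(1,2) phiS
    by (intro expect_insert_affine_phi independent_of_mult)
  finally show "bn_coeff_on par p (insert v V) (\<lambda>x. a x + b x * \<phi> x) S = bn_coeff_on par p V a S" .
qed

lemma L1_insert_affine_phi:
  assumes "independent_of v a" and "independent_of v b"
  shows "bn_L1_on par p (insert v V) (\<lambda>x. a x + b x * \<phi> x) = bn_L1_on par p V a + bn_L1_on par p V b"
proof -
  have "Pow V \<inter> insert v ` Pow V = {}" and "inj_on (insert v) (Pow V)"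
    using v_notin by (auto simp: inj_on_def)
  then show ?thesis
    unfolding bn_L1_on_def Pow_insert using finite_V
    by (simp add: sum.union_disjoint sum.reindex coeff_insert_affine_phi[OF assms])
qed

end

definition literal :: "bool \<Rightarrow> nat \<Rightarrow> (nat \<Rightarrow> bool) \<Rightarrow> real" where
  "literal b v x = (if b then of_bool (x v) else 1 - of_bool (x v))"

lemma conjunction_remove_literal:
  assumes "finite T0" and "finite T1" and "v \<in> T0 \<union> T1" and "v \<notin> T0 \<inter> T1"
  shows "conjunction T0 T1 x = conjunction (T0 - {v}) (T1 - {v}) x * literal (v \<in> T1) v x"
proof (cases "v \<in> T1")
  case True
  then have "T0 - {v} = T0" using assms(4) by auto
  then show ?thesis
    using True assms(2) by (simp add: conjunction_def literal_def prod.remove[of T1 v] mult_ac)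
next
  case False
  then have "T1 - {v} = T1" and "v \<in> T0" using assms(3) by auto
  then show ?thesis
    using False assms(1) by (simp add: conjunction_def literal_def prod.remove[of T0 v] mult_ac)
qed

lemma conjunction_insert_T1:
  "finite T1 \<Longrightarrow> conjunction T0 (insert u T1) x = conjunction T0 T1 x * of_bool (x u)"
  unfolding conjunction_def
  by (cases "u \<in> T1") (simp_all add: insert_absorb prod.remove[of T1 u] prod.insert mult_ac)

lemma conjunction_mult_pa_val:
  "finite T1 \<Longrightarrow> conjunction T0 T1 x * of_bool (pa_val par x v)
     = (case par v of None \<Rightarrow> 0 | Some u \<Rightarrow> conjunction T0 (insert u T1) x)"
  by (cases "par v") (simp_all add: pa_val_def conjunction_insert_T1)

lemma conjunction_clash:
  assumes "finite T0" and "finite T1" and "v \<in> T0" and "v \<in> T1"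
  shows "conjunction T0 T1 = (\<lambda>_. 0)"
proof
  fix x
  show "conjunction T0 T1 x = 0"
    unfolding conjunction_def using assms by (cases "x v") (simp_all add: prod_zero_iff, blast+)
qed

lemma literal_decomposition:
  assumes mu_pos: "\<And>x. 0 < bn_mu par p x v" and mu_less_1: "\<And>x. bn_mu par p x v < 1"
    and mu_diff: "\<And>x y. \<bar>bn_mu par p x v - bn_mu par p y v\<bar> \<le> \<alpha>"
    and sigma_diff: "\<And>x y. \<bar>bn_sigma par p x v - bn_sigma par p y v\<bar> \<le> \<alpha>"
  obtains A0 A1 B0 B1 where "\<bar>A0\<bar> \<le> 1" and "\<bar>B0\<bar> \<le> 1" and "\<bar>A1\<bar> \<le> \<alpha>" and "\<bar>B1\<bar> \<le> \<alpha>"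
    and "\<And>x. literal b v x = (A0 + A1 * of_bool (pa_val par x v))
                              + (B0 + B1 * of_bool (pa_val par x v)) * bn_phi par p v x"
proof -
  let ?\<mu> = "\<lambda>x. bn_mu par p x v" and ?\<sigma> = "\<lambda>x. bn_sigma par p x v"
  define ff :: "nat \<Rightarrow> bool" where "ff = (\<lambda>_. False)"
  define tt :: "nat \<Rightarrow> bool" where "tt = (\<lambda>_. True)"
  define s :: real where "s = (if b then 1 else -1)"
  have mu_affine: "?\<mu> x = ?\<mu> ff + (?\<mu> tt - ?\<mu> ff) * of_bool (pa_val par x v)" for x
    unfolding ff_def tt_def by (cases "par v") (simp_all add: bn_mu_def pa_val_def)
  have sigma_affine: "?\<sigma> x = ?\<sigma> ff + (?\<sigma> tt - ?\<sigma> ff) * of_bool (pa_val par x v)" for x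
    unfolding bn_sigma_def mu_affine[of x] by (cases "pa_val par x v") simp_all
  have lit: "of_bool (x v) = ?\<mu> x + ?\<sigma> x * bn_phi par p v x" for x
    using mu_pos[of x] mu_less_1[of x] by (simp add: bn_phi_def bn_sigma_def)
  have "\<bar>of_bool (\<not> b) + s * ?\<mu> ff\<bar> \<le> 1"
    using mu_pos[of ff] mu_less_1[of ff] by (simp add: s_def)
  moreover have "\<bar>s * ?\<sigma> ff\<bar> \<le> 1"
    using mu_pos[of ff] mu_less_1[of ff] by (simp add: s_def bn_sigma_def mult_le_one)
  moreover have "\<bar>s * (?\<mu> tt - ?\<mu> ff)\<bar> \<le> \<alpha>" and "\<bar>s * (?\<sigma> tt - ?\<sigma> ff)\<bar> \<le> \<alpha>"
    using mu_diff sigma_diff by (simp_all add: s_def abs_mult)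
  moreover have "literal b v x = (of_bool (\<not> b) + s * ?\<mu> ff + s * (?\<mu> tt - ?\<mu> ff) * of_bool (pa_val par x v))
      + (s * ?\<sigma> ff + s * (?\<sigma> tt - ?\<sigma> ff) * of_bool (pa_val par x v)) * bn_phi par p v x" for x
    using lit[of x] unfolding literal_def s_def mu_affine[of x] sigma_affine[of x]
    by (cases b) (simp_all add: algebra_simps)
  ultimately show ?thesis by (rule that)
qed

lemma growth_step:
  fixes a c K \<alpha> :: real
  assumes "a \<le> K ^ d" and "c \<le> K ^ Suc d" and "0 \<le> \<alpha>" and "1 \<le> K" and "2 + 2 * \<alpha> * K \<le> K"
  shows "2 * a + 2 * \<alpha> * c \<le> K ^ Suc d"
proof -
  have "2 * a + 2 * \<alpha> * c \<le> 2 * K ^ d + 2 * \<alpha> * K ^ Suc d"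
    using assms(1-3) by (intro add_mono mult_left_mono) auto
  also have "\<dots> = K ^ d * (2 + 2 * \<alpha> * K)" by (simp add: algebra_simps)
  also have "\<dots> \<le> K ^ d * K" using assms(4,5) by (intro mult_left_mono) auto
  finally show ?thesis by (simp add: mult.commute)
qed

lemma conjunction_growth_factor:
  fixes \<alpha> :: real
  assumes "0 \<le> \<alpha>" and "\<alpha> < 1/2"
  defines "K \<equiv> ((2 - 2*\<alpha>) / (1 - 2*\<alpha>)) ^ 2"
  shows "1 \<le> K" and "2 + 2 * \<alpha> * K \<le> K"
proof -
  have pos: "0 < 1 - 2*\<alpha>" using assms(2) by simp
  then show "1 \<le> K" unfolding K_def by (simp add: one_le_power)
  have "2 * (1 - 2*\<alpha>) \<le> (2 - 2*\<alpha>)^2"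
    using sum_squares_ge_zero[of "1 - \<alpha>" \<alpha>] by (simp add: power2_eq_square algebra_simps)
  then have "2 \<le> (2 - 2*\<alpha>)^2 / (1 - 2*\<alpha>)"
    using pos by (simp add: pos_le_divide_eq mult.commute)
  also have "\<dots> = K * (1 - 2*\<alpha>)"
    unfolding K_def using pos by (simp add: power2_eq_square)
  finally have "2 \<le> K * (1 - 2*\<alpha>)" .
  then show "2 + 2 * \<alpha> * K \<le> K" by (simp add: algebra_simps)
qed

context bn_leaf
begin

lemma L1_insert_independent:
  assumes "independent_of v a"
  shows "bn_L1_on par p (insert v V) a = bn_L1_on par p V a"
proof -
  have "independent_of v (\<lambda>_. 0)" by (simp add: independent_of_def)
  from L1_insert_affine_phi[OF assms this] show ?thesis
    by (simp only: mult_zero_left add_0_right bn_L1_on_zero)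
qed

lemma L1_mult_literal_le:
  assumes g: "independent_of v g" and "0 \<le> \<alpha>"
    and "\<And>x y. \<bar>\<mu> x - \<mu> y\<bar> \<le> \<alpha>" and "\<And>x y. \<bar>\<sigma> x - \<sigma> y\<bar> \<le> \<alpha>"
  shows "bn_L1_on par p (insert v V) (\<lambda>x. g x * literal b v x)
    \<le> 2 * bn_L1_on par p V g + 2 * \<alpha> * bn_L1_on par p V (\<lambda>x. g x * of_bool (pa_val par x v))"
proof -
  obtain A0 A1 B0 B1 where bounds: "\<bar>A0\<bar> \<le> 1" "\<bar>B0\<bar> \<le> 1" "\<bar>A1\<bar> \<le> \<alpha>" "\<bar>B1\<bar> \<le> \<alpha>"
    and lit: "\<And>x. literal b v x = (A0 + A1 * of_bool (pa_val par x v))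
                                   + (B0 + B1 * of_bool (pa_val par x v)) * \<phi> x"
    by (rule literal_decomposition[OF mu_pos mu_less_1 assms(3,4), where b = b]) (rule that)
  define h where "h x = g x * of_bool (pa_val par x v)" for x
  have h: "independent_of v h"
    unfolding h_def using g independent_of_pa_val[where par = par and w = v and v = v, OF no_loop]
    by (rule independent_of_mult)
  have "(\<lambda>x. g x * literal b v x) = (\<lambda>x. (A0 * g x + A1 * h x) + (B0 * g x + B1 * h x) * \<phi> x)"
    by (simp add: fun_eq_iff lit h_def algebra_simps)
  then have "bn_L1_on par p (insert v V) (\<lambda>x. g x * literal b v x)
      = bn_L1_on par p V (\<lambda>x. A0 * g x + A1 * h x) + bn_L1_on par p V (\<lambda>x. B0 * g x + B1 * h x)"
    using g h by (simp add: L1_insert_affine_phi independent_of_linear)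
  also have "\<dots> \<le> (\<bar>A0\<bar> + \<bar>B0\<bar>) * bn_L1_on par p V g + (\<bar>A1\<bar> + \<bar>B1\<bar>) * bn_L1_on par p V h"
    using bn_L1_on_linear_le[of par p V A0 g A1 h] bn_L1_on_linear_le[of par p V B0 g B1 h]
    by (simp add: algebra_simps)
  also have "\<dots> \<le> 2 * bn_L1_on par p V g + 2 * \<alpha> * bn_L1_on par p V h"
    using bounds bn_L1_on_nonneg[of par p V g] bn_L1_on_nonneg[of par p V h]
    by (intro add_mono mult_right_mono) auto
  finally show ?thesis unfolding h_def .
qed

lemma L1_conjunction_mult_pa_val_le:
  fixes K :: real
  assumes IH: "\<And>A B. A \<subseteq> V \<Longrightarrow> B \<subseteq> V \<Longrightarrow> bn_L1_on par p V (conjunction A B) \<le> K ^ card (A \<union> B)"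
    and "T0 \<subseteq> V" and "T1 \<subseteq> V" and parent: "\<And>u. par v = Some u \<Longrightarrow> u \<in> V" and "1 \<le> K"
  shows "bn_L1_on par p V (\<lambda>x. conjunction T0 T1 x * of_bool (pa_val par x v)) \<le> K ^ Suc (card (T0 \<union> T1))"
proof -
  have fin: "finite T0" "finite T1" using assms(2,3) finite_V finite_subset by auto
  show ?thesis
  proof (cases "par v")
    case None
    then show ?thesis using \<open>1 \<le> K\<close> by (simp add: conjunction_mult_pa_val[OF fin(2)] bn_L1_on_zero)
  next
    case (Some u)
    have "bn_L1_on par p V (conjunction T0 (insert u T1)) \<le> K ^ card (T0 \<union> insert u T1)"
      using assms(2,3) parent[OF Some] by (intro IH) auto
    also have "\<dots> \<le> K ^ Suc (card (T0 \<union> T1))"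
      using fin \<open>1 \<le> K\<close> by (intro power_increasing) (simp_all add: card_insert_if)
    finally show ?thesis by (simp add: conjunction_mult_pa_val[OF fin(2)] Some)
  qed
qed

lemma L1_conjunction_insert_le:
  fixes K \<alpha> :: real
  assumes IH: "\<And>A B. A \<subseteq> V \<Longrightarrow> B \<subseteq> V \<Longrightarrow> bn_L1_on par p V (conjunction A B) \<le> K ^ card (A \<union> B)"
    and T: "T0 \<subseteq> insert v V" "T1 \<subseteq> insert v V" and parent: "\<And>u. par v = Some u \<Longrightarrow> u \<in> V"
    and diff: "\<And>x y. \<bar>\<mu> x - \<mu> y\<bar> \<le> \<alpha>" "\<And>x y. \<bar>\<sigma> x - \<sigma> y\<bar> \<le> \<alpha>"
    and "0 \<le> \<alpha>" and "1 \<le> K" and "2 + 2 * \<alpha> * K \<le> K"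
  shows "bn_L1_on par p (insert v V) (conjunction T0 T1) \<le> K ^ card (T0 \<union> T1)"
proof -
  have fin: "finite T0" "finite T1" using T finite_V finite_subset by auto
  consider (absent) "v \<notin> T0 \<union> T1" | (clash) "v \<in> T0 \<inter> T1" | (single) "v \<in> T0 \<union> T1" "v \<notin> T0 \<inter> T1"
    by blast
  then show ?thesis
  proof cases
    case absent
    then have "T0 \<subseteq> V" "T1 \<subseteq> V" using T by auto
    then show ?thesis
      using absent by (simp add: L1_insert_independent independent_of_conjunction IH)
  next
    case clash
    then have "conjunction T0 T1 = (\<lambda>_. 0)" using fin by (intro conjunction_clash[of _ _ v]) auto
    then show ?thesis using \<open>1 \<le> K\<close> by (simp add: bn_L1_on_zero)
  next
    case single
    define g where "g = conjunction (T0 - {v}) (T1 - {v})"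
    have sub: "T0 - {v} \<subseteq> V" "T1 - {v} \<subseteq> V" using T by auto
    have card: "card (T0 \<union> T1) = Suc (card ((T0 - {v}) \<union> (T1 - {v})))"
      using single fin card_Suc_Diff1[of "T0 \<union> T1" v] by (simp add: Un_Diff)
    have "bn_L1_on par p (insert v V) (conjunction T0 T1)
        = bn_L1_on par p (insert v V) (\<lambda>x. g x * literal (v \<in> T1) v x)"
      unfolding g_def using conjunction_remove_literal[OF fin single] by presburger
    also have "\<dots> \<le> 2 * bn_L1_on par p V g + 2 * \<alpha> * bn_L1_on par p V (\<lambda>x. g x * of_bool (pa_val par x v))"
      unfolding g_def by (intro L1_mult_literal_le independent_of_conjunction diff \<open>0 \<le> \<alpha>\<close>) auto
    also have "\<dots> \<le> K ^ card (T0 \<union> T1)"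
      unfolding card g_def using sub assms(7-9)
      by (intro growth_step IH L1_conjunction_mult_pa_val_le[OF IH _ _ parent]) auto
    finally show ?thesis .
  qed
qed

end

lemma obtain_leaf:
  fixes r :: "nat \<Rightarrow> nat"
  assumes "finite V" and "V \<noteq> {}" and rank: "\<And>w u. w \<in> V \<Longrightarrow> par w = Some u \<Longrightarrow> r u < r w"
  obtains v where "v \<in> V" and "\<forall>w\<in>V. par w \<noteq> Some v" and "par v \<noteq> Some v"
proof -
  have "Max (r ` V) \<in> r ` V" using assms(1,2) by (intro Max_in) auto
  then obtain v where v: "v \<in> V" "r v = Max (r ` V)" by auto
  then have "\<forall>w\<in>V. r w \<le> r v" using assms(1) by auto
  then show thesis using v(1) rank by (intro that) force+
qed

lemma L1_on_conjunction_le: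
  fixes r :: "nat \<Rightarrow> nat" and \<alpha> K :: real
  assumes "finite V"
    and "\<And>w u. w \<in> V \<Longrightarrow> par w = Some u \<Longrightarrow> u \<in> V \<and> r u < r w"
    and "\<And>w x. w \<in> V \<Longrightarrow> 0 < bn_mu par p x w \<and> bn_mu par p x w < 1"
    and "\<And>w x y. w \<in> V \<Longrightarrow>
       \<bar>bn_mu par p x w - bn_mu par p y w\<bar> \<le> \<alpha> \<and> \<bar>bn_sigma par p x w - bn_sigma par p y w\<bar> \<le> \<alpha>"
    and "T0 \<subseteq> V" and "T1 \<subseteq> V" and "0 \<le> \<alpha>" and "1 \<le> K" and "2 + 2 * \<alpha> * K \<le> K"
  shows "bn_L1_on par p V (conjunction T0 T1) \<le> K ^ card (T0 \<union> T1)"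
  using assms(1-6)
proof (induction V arbitrary: T0 T1 rule: finite_psubset_induct)
  case (psubset V)
  note parents = psubset.prems(1) and mu = psubset.prems(2) and diff = psubset.prems(3)
  show ?case
  proof (cases "V = {}")
    case True
    then show ?thesis using psubset.prems(4,5)
      by (simp add: bn_L1_on_def bn_coeff_on_def bn_expect_on_def bn_prob_on_def conjunction_def bn_phiS_def)
  next
    case False
    obtain v where v: "v \<in> V" "\<forall>w\<in>V. par w \<noteq> Some v" "par v \<noteq> Some v"
      using obtain_leaf[OF psubset.hyps False] parents by blast
    define W where "W = V - {v}"
    have V: "V = insert v W" and "W \<subset> V" using v(1) unfolding W_def by auto
    interpret bn_leaf par p W v
      using psubset.hyps v mu[OF v(1)] unfolding W_def by unfold_locales auto
    have parents_W: "\<And>w u. w \<in> W \<Longrightarrow> par w = Some u \<Longrightarrow> u \<in> W \<and> r u < r w"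
      using parents v(2) unfolding W_def by blast
    show ?thesis
      unfolding V
    proof (rule L1_conjunction_insert_le)
      show "bn_L1_on par p W (conjunction A B) \<le> K ^ card (A \<union> B)" if "A \<subseteq> W" "B \<subseteq> W" for A B
        using psubset.IH[OF \<open>W \<subset> V\<close> parents_W mu diff that] unfolding W_def by blast
      show "u \<in> W" if "par v = Some u" for u
        using parents[OF v(1) that] v(3) that unfolding W_def by auto
    qed (use psubset.prems(4,5) diff[OF v(1)] assms(7-9) in \<open>auto simp: V\<close>)
  qed
qed

lemma cpt_open_bn_mu:
  "cpt_open n par p \<Longrightarrow> v < n \<Longrightarrow> 0 < bn_mu par p x v \<and> bn_mu par p x v < 1"
  by (cases "par v") (auto simp: cpt_open_def bn_mu_def pa_val_def)

theorem mainTheorem7: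
  fixes \<alpha> :: real and n d :: nat and par :: "nat \<Rightarrow> nat option"
    and p :: "nat \<Rightarrow> bool \<Rightarrow> real" and T0 T1 :: "nat set"
  assumes "0 \<le> \<alpha>" and "\<alpha> < 1/2"
    and "is_tree n par" and "cpt_open n par p" and "diff_bounded \<alpha> n par p"
    and "T0 \<subseteq> {0..<n}" and "T1 \<subseteq> {0..<n}" and "T0 \<inter> T1 = {}"
    and "card (T0 \<union> T1) = d"
  shows "bn_L1 n par p (conjunction T0 T1) \<le> ((2 - 2*\<alpha>) / (1 - 2*\<alpha>)) ^ (2*d)"
proof -
  define K where "K = ((2 - 2*\<alpha>) / (1 - 2*\<alpha>)) ^ 2"
  obtain r :: "nat \<Rightarrow> nat" where r: "\<forall>v<n. \<forall>u. par v = Some u \<longrightarrow> r u < r v"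
    using assms(3) unfolding is_tree_def by blast
  have "bn_L1_on par p {0..<n} (conjunction T0 T1) \<le> K ^ card (T0 \<union> T1)"
  proof (rule L1_on_conjunction_le)
    show "u \<in> {0..<n} \<and> r u < r w" if "w \<in> {0..<n}" "par w = Some u" for w u
      using that r assms(3) unfolding is_tree_def by auto
    show "1 \<le> K" "2 + 2 * \<alpha> * K \<le> K"
      unfolding K_def using conjunction_growth_factor[OF assms(1,2)] by auto
  qed (use assms(1,5-7) cpt_open_bn_mu[OF assms(4)] in \<open>auto simp: diff_bounded_def\<close>)
  then show ?thesis
    unfolding bn_L1_eq_bn_L1_on K_def assms(9) by (simp add: power_mult)
qed

end
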